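(* Let $A\subset\mathbb{R}^d$ have positive reach $\tau_A$, let $\bar\tau\in(0,\tau_A]$, and let $\mathbb{X}\subset A$ be a finite point sample that is $\delta$-dense in $A$ with $\delta<\bar\tau/4$. Let $x\in\mathbb{X}$, $\epsilon\in(0,\tau_A)$, $q\in A$, and $p\in B_\epsilon(x)\cap\mathrm{UP}(A,q)$. If $q\notin B_\epsilon(x)$, then the sphere $\partial B_\epsilon(x)$ meets the line segment $\overline{qp}$ in a unique point $y$, and $\|y-q\|\le\epsilon^2/\tau_A$.
   Context: For closed $A\subset\mathbb{R}^d$: $\mathrm{UP}(A)$ is the set of points with a unique nearest point in $A$, $\xi_A$ maps each such point to it, $\mathrm{UP}(A,q)=\{z\in\mathrm{UP}(A):\xi_A(z)=q\}$, $\mathrm{Med}(A)=\mathbb{R}^d\setminus\mathrm{UP}(A)$, reach $\tau_A=\inf_{a\in A}d(a,\mathrm{Med}(A))$. $\mathbb{X}$ is $\delta$-dense in $A$ if every point of $A$ is at distance $<\delta$ from a point of $\mathbb{X}$. $B_\epsilon(x)$ is the open Euclidean ball and $\partial B_\epsilon(x)$ its boundary sphere. *)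

theory Defs
  imports "HOL-Analysis.Analysis"
begin

definition UP :: "'a::euclidean_space set \<Rightarrow> 'a set" where
  "UP A = {z. \<exists>!a. a \<in> A \<and> dist z a = infdist z A}"

definition xi :: "'a::euclidean_space set \<Rightarrow> 'a \<Rightarrow> 'a" where
  "xi A z = (THE a. a \<in> A \<and> dist z a = infdist z A)"

definition UP_at :: "'a::euclidean_space set \<Rightarrow> 'a \<Rightarrow> 'a set" where
  "UP_at A q = {z \<in> UP A. xi A z = q}"

definition Med :: "'a::euclidean_space set \<Rightarrow> 'a set" where
  "Med A = UNIV - UP A"

definition reach :: "'a::euclidean_space set \<Rightarrow> ereal" where
  "reach A = (INF a\<in>A. (if Med A = {} then \<infinity> else ereal (infdist a (Med A))))"

end

theory Submission
  imports Defs
begin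

(* Write u for the unit vector from q towards p. Since q is the nearest point of p in A,
  Federer's normal-ray property gives infdist (q + s u) A = s for every s below the reach;
  it is proved by a continuation argument whose step is a Brouwer fixed point of the
  normalised normal field y -> (y - xi A y) / infdist y A. Comparing q + s u with the point
  x of A yields 2 s <y - q, x - q> <= |y - q| |x - q|^2 for y on the segment from q to p.
  The distance to x is convex along that segment, at least eps at q and below eps at p,
  so the sphere is met exactly once; expanding |x - y|^2 = eps^2 with the inequality above
  gives |y - q| <= eps^2 / s for all s below the reach. *)

lemma xi_nearest:
  assumes "z \<in> UP A"
  shows "xi A z \<in> A" and "dist z (xi A z) = infdist z A"
proof -
  have "\<exists>!a. a \<in> A \<and> dist z a = infdist z A"
    using assms by (simp add: UP_def)
  then have "xi A z \<in> A \<and> dist z (xi A z) = infdist z A"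
    unfolding xi_def by (rule theI')
  then show "xi A z \<in> A" "dist z (xi A z) = infdist z A"
    by auto
qed

lemma xi_unique:
  assumes "z \<in> UP A" "a \<in> A" "dist z a = infdist z A"
  shows "a = xi A z"
  using assms xi_nearest[OF assms(1)] by (auto simp: UP_def)

lemma UP_if_infdist_less_reach:
  assumes "closed A" "A \<noteq> {}" "ereal (infdist z A) < reach A"
  shows "z \<in> UP A"
proof (rule ccontr)
  assume "z \<notin> UP A"
  then have z: "z \<in> Med A"
    by (simp add: Med_def)
  obtain a where a: "a \<in> A" "infdist z A = dist z a"
    using infdist_attains_inf[OF assms(1,2)] by blast
  have "reach A \<le> ereal (infdist a (Med A))"
    unfolding reach_def using a(1) z by (auto intro: INF_lower2)
  also have "\<dots> \<le> ereal (dist z a)"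
    using infdist_le[OF z, of a] by (simp add: dist_commute)
  finally show False
    using assms(3) a(2) by simp
qed

lemma compact_uniform_gap:
  fixes f :: "'a::topological_space \<Rightarrow> real"
  assumes "compact K" "continuous_on K f" "\<And>a. a \<in> K \<Longrightarrow> c < f a"
  obtains g where "0 < g" "\<And>a. a \<in> K \<Longrightarrow> c + g \<le> f a"
proof (cases "K = {}")
  case True
  then show thesis
    using that[of 1] by simp
next
  case False
  then obtain a0 where "a0 \<in> K" "\<forall>a\<in>K. f a0 \<le> f a"
    using continuous_attains_inf[OF assms(1) _ assms(2)] by blast
  then show thesis
    using assms(3) that[of "f a0 - c"] by fastforce
qed

lemma UP_nearest_gap:
  assumes "closed A" "z \<in> UP A" "0 < e"
  obtains g where "0 < g"
    "\<And>a. a \<in> A \<Longrightarrow> e \<le> dist a (xi A z) \<Longrightarrow> infdist z A + g \<le> dist z a"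
proof -
  define K where "K = A \<inter> cball z (infdist z A + 1) - ball (xi A z) e"
  have "compact K"
    unfolding K_def using assms(1) by (intro compact_diff closed_Int_compact) auto
  moreover have "infdist z A < dist z a" if "a \<in> K" for a
  proof -
    have "a \<in> A" "a \<noteq> xi A z"
      using that assms(3) by (auto simp: K_def)
    then show ?thesis
      using xi_unique[OF assms(2)] infdist_le[of a A z] by fastforce
  qed
  ultimately obtain g where g: "0 < g" "\<And>a. a \<in> K \<Longrightarrow> infdist z A + g \<le> dist z a"
    using compact_uniform_gap continuous_on_dist[OF continuous_on_const continuous_on_id] by metis
  show thesis
  proof (rule that[of "min g 1"])
    fix a assume "a \<in> A" "e \<le> dist a (xi A z)"
    then have "a \<in> K \<or> infdist z A + 1 < dist z a"
      by (auto simp: K_def dist_commute)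
    then show "infdist z A + min g 1 \<le> dist z a"
      using g(2) by fastforce
  qed (use g(1) in simp)
qed

lemma continuous_on_xi:
  assumes "closed A" "S \<subseteq> UP A"
  shows "continuous_on S (xi A)"
  unfolding continuous_on_iff
proof (intro ballI allI impI)
  fix z e assume "z \<in> S" "(0::real) < e"
  then obtain g where g: "0 < g"
    "\<And>a. a \<in> A \<Longrightarrow> e \<le> dist a (xi A z) \<Longrightarrow> infdist z A + g \<le> dist z a"
    using UP_nearest_gap[OF assms(1)] assms(2) by blast
  have "dist (xi A y) (xi A z) < e" if "y \<in> S" "dist y z < g / 2" for y
  proof -
    have "dist z (xi A y) \<le> dist z y + infdist y A"
      using dist_triangle[of z "xi A y" y] xi_nearest(2)[of y A] that(1) assms(2) by auto
    also have "\<dots> \<le> infdist z A + 2 * dist y z"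
      using infdist_triangle[of y A z] by (simp add: dist_commute)
    finally show ?thesis
      using g(2)[of "xi A y"] xi_nearest(1)[of y A] that assms(2) by force
  qed
  then show "\<exists>d>0. \<forall>y\<in>S. dist y z < d \<longrightarrow> dist (xi A y) (xi A z) < e"
    using g(1) by (intro exI[of _ "g / 2"]) auto
qed

lemma infdist_closed_segment_nearest:
  fixes a b y :: "'a::real_normed_vector"
  assumes "a \<in> A" "dist y a = infdist y A" "b \<in> closed_segment a y"
  shows "infdist b A = dist b a"
proof (rule antisym)
  show "infdist b A \<le> dist b a"
    using assms(1) by (rule infdist_le)
  obtain t where t: "0 \<le> t" "t \<le> 1" "b = (1 - t) *\<^sub>R a + t *\<^sub>R y"
    using assms(3) by (auto simp: in_segment)
  have "y - b = (1 - t) *\<^sub>R (y - a)"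
    using t(3) by (simp add: algebra_simps)
  then have "dist y b = (1 - t) * dist y a"
    using t(2) by (simp add: dist_norm)
  have "b - a = t *\<^sub>R (y - a)"
    using t(3) by (simp add: algebra_simps)
  then have "dist b a = t * dist y a"
    using t(1) by (simp add: dist_norm)
  with \<open>dist y b = (1 - t) * dist y a\<close> have "dist y a = dist y b + dist b a"
    by (simp add: algebra_simps)
  then have "dist b a \<le> dist b a'" if "a' \<in> A" for a'
    using assms(2) infdist_le[OF that, of y] dist_triangle[of y a' b] by linarith
  moreover have "A \<noteq> {}"
    using assms(1) by blast
  ultimately show "dist b a \<le> infdist b A"
    by (simp add: infdist_notempty cINF_greatest)
qed

lemma exists_normal_segment_through_center:
  assumes "closed A" "0 < \<eta>" "cball b \<eta> \<subseteq> UP A" "cball b \<eta> \<inter> A = {}"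
  obtains y where "y \<in> cball b \<eta>" "y - b = (\<eta> / infdist y A) *\<^sub>R (y - xi A y)"
proof -
  have "xi A b \<in> A"
    using assms(2,3) by (intro xi_nearest(1)) auto
  then have "A \<noteq> {}"
    by auto
  have pos: "0 < infdist y A" if "y \<in> cball b \<eta>" for y
    using assms that \<open>A \<noteq> {}\<close> by (intro infdist_pos_not_in_closed) auto
  define F where "F y = b + (\<eta> / infdist y A) *\<^sub>R (y - xi A y)" for y
  have "continuous_on (cball b \<eta>) F"
    unfolding F_def using pos
    by (intro continuous_intros continuous_on_xi[OF assms(1,3)]) force
  moreover have "F \<in> cball b \<eta> \<rightarrow> cball b \<eta>"
  proof
    fix y assume y: "y \<in> cball b \<eta>"
    have "norm (y - xi A y) = infdist y A"
      using xi_nearest(2)[of y A] y assms(3) by (auto simp: dist_norm)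
    then show "F y \<in> cball b \<eta>"
      using pos[OF y] assms(2) by (simp add: F_def dist_norm)
  qed
  ultimately obtain y where "y \<in> cball b \<eta>" "F y = y"
    using brouwer_ball[OF assms(2)] by blast
  then show thesis
    using that[of y] by (metis F_def add_diff_cancel_left')
qed

lemma normal_segment_through:
  assumes "y \<in> UP A" "0 \<le> \<eta>" "\<eta> \<le> infdist y A"
    and "y - b = (\<eta> / infdist y A) *\<^sub>R (y - xi A y)"
  shows "b - xi A y = (1 - \<eta> / infdist y A) *\<^sub>R (y - xi A y)"
    and "infdist b A = infdist y A - \<eta>"
    and "dist b (xi A y) = infdist b A"
proof -
  define a r where "a = xi A y" and "r = infdist y A"
  have a: "a \<in> A" "dist y a = r"
    using xi_nearest[OF assms(1)] by (simp_all add: a_def r_def)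
  have "\<eta> / r \<le> 1"
    using assms(2,3) by (cases "r = 0") (auto simp: r_def)
  have "b = y - (y - b)"
    by simp
  also have "\<dots> = y - (\<eta> / r) *\<^sub>R (y - a)"
    using assms(4) by (simp only: a_def r_def)
  finally have b: "b - a = (1 - \<eta> / r) *\<^sub>R (y - a)"
    by (simp add: algebra_simps)
  then show "b - xi A y = (1 - \<eta> / infdist y A) *\<^sub>R (y - xi A y)"
    by (simp add: a_def r_def)
  have "b = (1 - (1 - \<eta> / r)) *\<^sub>R a + (1 - \<eta> / r) *\<^sub>R y"
    using b by (simp add: algebra_simps)
  then have "b \<in> closed_segment a y"
    using \<open>\<eta> / r \<le> 1\<close> assms(2,3) unfolding in_segment
    by (intro exI[of _ "1 - \<eta> / r"]) (simp add: r_def)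
  then have "infdist b A = dist b a"
    using infdist_closed_segment_nearest a by (simp add: r_def)
  also have "dist b a = (1 - \<eta> / r) * r"
    using b a(2) \<open>\<eta> / r \<le> 1\<close> by (simp add: dist_norm)
  also have "\<dots> = r - \<eta>"
    using assms(2,3) by (cases "r = 0") (auto simp: r_def algebra_simps)
  finally show "infdist b A = infdist y A - \<eta>"
    by (simp add: r_def)
  with \<open>infdist b A = dist b a\<close> show "dist b (xi A y) = infdist b A"
    by (simp add: a_def)
qed

lemma cball_subset_UP_disjoint:
  assumes "closed A" "A \<noteq> {}" "0 < \<eta>" "2 * \<eta> \<le> d" "infdist b A = d"
    and "ereal (d + \<eta>) < reach A"
  shows "cball b \<eta> \<subseteq> UP A" and "cball b \<eta> \<inter> A = {}"
proof -
  have near: "d - \<eta> \<le> infdist y A \<and> infdist y A \<le> d + \<eta>" if "y \<in> cball b \<eta>" for y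
    using that infdist_triangle_abs[of y A b] assms(5) by (auto simp: dist_commute)
  show "cball b \<eta> \<subseteq> UP A"
  proof
    fix y assume "y \<in> cball b \<eta>"
    then have "ereal (infdist y A) < reach A"
      using near assms(6) by (meson ereal_less_eq(3) le_less_trans)
    then show "y \<in> UP A"
      using UP_if_infdist_less_reach assms(1,2) by blast
  qed
  have "infdist y A \<noteq> 0" if "y \<in> cball b \<eta>" for y
    using near[OF that] assms(3,4) by linarith
  then show "cball b \<eta> \<inter> A = {}"
    by (metis disjoint_iff infdist_zero)
qed

text \<open>The point at distance \<open>T + \<eta>\<close> is obtained as a Brouwer fixed point \<open>y\<close> near
  \<open>b = q + T u\<close>: the normal segment of \<open>y\<close> passes through \<open>b\<close>, whose nearest point is \<open>q\<close>,
  so \<open>y\<close> lies on the ray.\<close>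
lemma infdist_ray_step:
  assumes "closed A" "q \<in> A" "norm u = 1" "0 < \<eta>" "2 * \<eta> \<le> T"
    and T: "infdist (q + T *\<^sub>R u) A = T" and reach: "ereal (T + \<eta>) < reach A"
  shows "infdist (q + (T + \<eta>) *\<^sub>R u) A = T + \<eta>"
proof -
  define b where "b = q + T *\<^sub>R u"
  have "A \<noteq> {}" "infdist b A = T"
    using assms(2) T by (auto simp: b_def)
  then have UP: "cball b \<eta> \<subseteq> UP A" and off: "cball b \<eta> \<inter> A = {}"
    using cball_subset_UP_disjoint[OF assms(1) _ assms(4,5) _ reach] by auto
  obtain y where y: "y \<in> cball b \<eta>" "y - b = (\<eta> / infdist y A) *\<^sub>R (y - xi A y)"
    using exists_normal_segment_through_center[OF assms(1,4) UP off] by blast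
  define r where "r = infdist y A"
  have "T - \<eta> \<le> r"
    using infdist_triangle_abs[of y A b] y(1) \<open>infdist b A = T\<close> by (auto simp: r_def dist_commute)
  then have "\<eta> \<le> r" "0 < r"
    using assms(4,5) by auto
  have "y \<in> UP A" "b \<in> UP A"
    using UP y(1) assms(4) by auto
  have seg: "b - xi A y = (1 - \<eta> / r) *\<^sub>R (y - xi A y)" "infdist b A = r - \<eta>"
    "dist b (xi A y) = infdist b A"
    using normal_segment_through[OF \<open>y \<in> UP A\<close> _ _ y(2)] \<open>\<eta> \<le> r\<close> assms(4) by (simp_all add: r_def)
  have "T = r - \<eta>"
    using seg(2) T by (simp add: b_def)
  have "dist b q = infdist b A"
    using T assms(3,4,5) by (simp add: b_def dist_norm)
  then have "xi A y = q"
    using xi_unique[OF \<open>b \<in> UP A\<close>] xi_nearest(1)[OF \<open>y \<in> UP A\<close>] seg(3) assms(2) by metis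
  have "0 < T"
    using assms(4,5) by simp
  have "r *\<^sub>R u = (r / T) *\<^sub>R (T *\<^sub>R u)"
    using \<open>0 < T\<close> by simp
  also have "T *\<^sub>R u = (T / r) *\<^sub>R (y - q)"
    using seg(1) \<open>xi A y = q\<close> \<open>T = r - \<eta>\<close> \<open>0 < r\<close> by (simp add: b_def diff_divide_distrib)
  also have "(r / T) *\<^sub>R (T / r) *\<^sub>R (y - q) = y - q"
    using \<open>0 < r\<close> \<open>0 < T\<close> by simp
  finally have "y = q + r *\<^sub>R u"
    by (metis add.commute diff_add_cancel)
  then show ?thesis
    using \<open>T = r - \<eta>\<close> by (simp add: r_def)
qed

lemma infdist_ray_shrink:
  assumes "q \<in> A" "norm u = 1" "infdist (q + s *\<^sub>R u) A = s" "0 \<le> s'" "s' \<le> s"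
  shows "infdist (q + s' *\<^sub>R u) A = s'"
proof (cases "s = 0")
  case True
  then show ?thesis
    using assms by simp
next
  case False
  then have "q + s' *\<^sub>R u = (1 - s' / s) *\<^sub>R q + (s' / s) *\<^sub>R (q + s *\<^sub>R u)"
    by (simp add: algebra_simps)
  then have "q + s' *\<^sub>R u \<in> closed_segment q (q + s *\<^sub>R u)"
    using assms(4,5) False by (auto simp: in_segment intro!: exI[of _ "s' / s"])
  moreover have "dist (q + s *\<^sub>R u) q = infdist (q + s *\<^sub>R u) A"
    using assms(2,3,4,5) by (simp add: dist_norm)
  ultimately have "infdist (q + s' *\<^sub>R u) A = dist (q + s' *\<^sub>R u) q"
    using infdist_closed_segment_nearest[OF assms(1)] by blast
  then show ?thesis
    using assms(2,4) by (simp add: dist_norm)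
qed

lemma infdist_normal_ray:
  assumes "closed A" "q \<in> A" "norm u = 1" "0 < s\<^sub>0" "infdist (q + s\<^sub>0 *\<^sub>R u) A = s\<^sub>0"
    and "0 \<le> s" "ereal s < reach A"
  shows "infdist (q + s *\<^sub>R u) A = s"
proof (rule ccontr)
  assume fails: "infdist (q + s *\<^sub>R u) A \<noteq> s"
  then have "s\<^sub>0 < s"
    using infdist_ray_shrink[OF assms(2,3,5,6)] by force
  define S where "S = {0..s} \<inter> {t. infdist (q + t *\<^sub>R u) A = t}"
  have "closed S"
    unfolding S_def by (intro closed_Int closed_atLeastAtMost closed_Collect_eq continuous_intros)
  have "s\<^sub>0 \<in> S" "bdd_above S"
    using \<open>s\<^sub>0 < s\<close> assms(4,5) by (auto simp: S_def)
  define T where "T = Sup S"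
  have "T \<in> S" "s\<^sub>0 \<le> T"
    unfolding T_def using closed_contains_Sup cSup_upper \<open>closed S\<close> \<open>s\<^sub>0 \<in> S\<close> \<open>bdd_above S\<close>
    by blast+
  then have T: "T \<le> s" "infdist (q + T *\<^sub>R u) A = T"
    by (auto simp: S_def)
  with fails have "T < s"
    by (metis order_le_less)
  define \<eta> where "\<eta> = min (T / 2) (s - T)"
  have "0 < \<eta>" "2 * \<eta> \<le> T" "T + \<eta> \<le> s"
    using \<open>T < s\<close> \<open>s\<^sub>0 \<le> T\<close> assms(4) by (auto simp: \<eta>_def min_def)
  then have "infdist (q + (T + \<eta>) *\<^sub>R u) A = T + \<eta>"
    using infdist_ray_step[OF assms(1-3) _ _ T(2)] assms(7) by (meson ereal_less_eq(3) le_less_trans)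
  then have "T + \<eta> \<in> S"
    using \<open>T + \<eta> \<le> s\<close> \<open>0 < \<eta>\<close> \<open>s\<^sub>0 \<le> T\<close> assms(4) by (simp add: S_def)
  then show False
    using cSup_upper[OF _ \<open>bdd_above S\<close>] \<open>0 < \<eta>\<close> by (fastforce simp: T_def)
qed

lemma norm_diff_power2:
  fixes v w :: "'a::real_inner"
  shows "(norm (v - w))\<^sup>2 = (norm v)\<^sup>2 - 2 * (v \<bullet> w) + (norm w)\<^sup>2"
  by (simp add: power2_norm_eq_inner inner_diff_left inner_diff_right inner_commute)

lemma inner_le_reach:
  assumes "closed A" "q \<in> A" "x \<in> A" "dist z q = infdist z A" "0 < s" "ereal s < reach A"
  shows "2 * s * ((z - q) \<bullet> (x - q)) \<le> norm (z - q) * (norm (x - q))\<^sup>2"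
proof (cases "z = q")
  case False
  define L where "L = norm (z - q)"
  define u where "u = (1 / L) *\<^sub>R (z - q)"
  have "0 < L" "norm u = 1" "q + L *\<^sub>R u = z"
    using False by (auto simp: L_def u_def)
  moreover have "infdist (q + L *\<^sub>R u) A = L"
    using assms(4) \<open>q + L *\<^sub>R u = z\<close> by (simp add: L_def dist_norm)
  ultimately have "infdist (q + s *\<^sub>R u) A = s"
    using infdist_normal_ray[OF assms(1,2)] assms(5,6) by simp
  then have "s \<le> dist (q + s *\<^sub>R u) x"
    using infdist_le[OF assms(3)] by metis
  also have "\<dots> = norm (s *\<^sub>R u - (x - q))"
    by (simp add: dist_norm algebra_simps)
  finally have "s \<le> norm (s *\<^sub>R u - (x - q))" .
  then have "s\<^sup>2 \<le> (norm (s *\<^sub>R u - (x - q)))\<^sup>2"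
    using assms(5) by (simp add: power_mono)
  also have "\<dots> = s\<^sup>2 - 2 * s * (u \<bullet> (x - q)) + (norm (x - q))\<^sup>2"
    using \<open>norm u = 1\<close> by (simp add: norm_diff_power2 power_mult_distrib)
  finally have "2 * s * (u \<bullet> (x - q)) \<le> (norm (x - q))\<^sup>2"
    by simp
  then have "L * (2 * s * (u \<bullet> (x - q))) \<le> L * (norm (x - q))\<^sup>2"
    using \<open>0 < L\<close> by simp
  then show ?thesis
    using \<open>0 < L\<close> by (simp add: u_def L_def)
qed simp

lemma dist_less_along_segment:
  fixes x q p :: "'a::real_normed_vector"
  assumes "dist x p < \<epsilon>" "dist x ((1 - s) *\<^sub>R q + s *\<^sub>R p) \<le> \<epsilon>" "s < t" "t \<le> 1"
  shows "dist x ((1 - t) *\<^sub>R q + t *\<^sub>R p) < \<epsilon>"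
proof -
  \<comment> \<open>the point at parameter \<open>t\<close> divides the segment from the point at \<open>s\<close> to \<open>p\<close> in ratio \<open>\<mu>\<close>\<close>
  define \<mu> where "\<mu> = (t - s) / (1 - s)"
  have "0 < 1 - s"
    using assms(3,4) by simp
  then have "0 < \<mu>" "\<mu> \<le> 1"
    using assms(3,4) by (simp_all add: \<mu>_def)
  have "\<mu> * (1 - s) = t - s"
    using \<open>0 < 1 - s\<close> by (simp add: \<mu>_def)
  moreover have "(1 - \<mu>) * (1 - s) = (1 - s) - \<mu> * (1 - s)" "(1 - \<mu>) * s + \<mu> = s + \<mu> * (1 - s)"
    by (simp_all add: algebra_simps)
  ultimately have "(1 - \<mu>) * (1 - s) = 1 - t" "(1 - \<mu>) * s + \<mu> = t"
    by simp_all
  moreover have "(1 - \<mu>) *\<^sub>R ((1 - s) *\<^sub>R q + s *\<^sub>R p) + \<mu> *\<^sub>R p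
      = ((1 - \<mu>) * (1 - s)) *\<^sub>R q + ((1 - \<mu>) * s + \<mu>) *\<^sub>R p"
    by (simp add: scaleR_add_left scaleR_add_right)
  ultimately have "(1 - t) *\<^sub>R q + t *\<^sub>R p = (1 - \<mu>) *\<^sub>R ((1 - s) *\<^sub>R q + s *\<^sub>R p) + \<mu> *\<^sub>R p"
    by simp
  then have "dist x ((1 - t) *\<^sub>R q + t *\<^sub>R p)
      \<le> (1 - \<mu>) * dist x ((1 - s) *\<^sub>R q + s *\<^sub>R p) + \<mu> * dist x p"
    using convex_onD[OF convex_on_dist[OF convex_UNIV], of \<mu>] \<open>0 < \<mu>\<close> \<open>\<mu> \<le> 1\<close> by simp
  also have "\<dots> < (1 - \<mu>) * \<epsilon> + \<mu> * \<epsilon>"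
    using assms(1,2) \<open>0 < \<mu>\<close> \<open>\<mu> \<le> 1\<close> by (intro add_le_less_mono mult_left_mono) auto
  finally show ?thesis
    by (simp add: algebra_simps)
qed

lemma closed_segment_sphere_unique:
  fixes x q p :: "'a::real_normed_vector"
  assumes "\<epsilon> \<le> dist x q" "dist x p < \<epsilon>"
  shows "\<exists>!y. y \<in> sphere x \<epsilon> \<inter> closed_segment q p"
proof (rule ex_ex1I)
  have "connected ((\<lambda>y. dist x y) ` closed_segment q p)"
    using continuous_on_dist[OF continuous_on_const continuous_on_id]
      convex_connected[OF convex_closed_segment]
    by (rule connected_continuous_image)
  moreover have "dist x p \<in> (\<lambda>y. dist x y) ` closed_segment q p"
    "dist x q \<in> (\<lambda>y. dist x y) ` closed_segment q p"
    by (rule imageI, rule ends_in_segment)+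
  ultimately have "\<epsilon> \<in> (\<lambda>y. dist x y) ` closed_segment q p"
    using less_imp_le[OF assms(2)] assms(1) by (rule connectedD_interval)
  then show "\<exists>y. y \<in> sphere x \<epsilon> \<inter> closed_segment q p"
    by force
next
  have ordered: "s = t" if "s \<le> t" "t \<le> 1"
    and "dist x ((1 - s) *\<^sub>R q + s *\<^sub>R p) = \<epsilon>" "dist x ((1 - t) *\<^sub>R q + t *\<^sub>R p) = \<epsilon>" for s t
  proof (rule ccontr)
    assume "s \<noteq> t"
    with that(1) have "s < t"
      by simp
    with dist_less_along_segment[where x=x and q=q and p=p and s=s and t=t and \<epsilon>=\<epsilon>] assms(2) that
    show False
      by simp
  qed
  fix y1 y2
  assume y1: "y1 \<in> sphere x \<epsilon> \<inter> closed_segment q p"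
    and y2: "y2 \<in> sphere x \<epsilon> \<inter> closed_segment q p"
  obtain s where s: "s \<le> 1" "y1 = (1 - s) *\<^sub>R q + s *\<^sub>R p"
    using y1 by (auto simp: in_segment)
  obtain t where t: "t \<le> 1" "y2 = (1 - t) *\<^sub>R q + t *\<^sub>R p"
    using y2 by (auto simp: in_segment)
  have "dist x ((1 - s) *\<^sub>R q + s *\<^sub>R p) = \<epsilon>" "dist x ((1 - t) *\<^sub>R q + t *\<^sub>R p) = \<epsilon>"
    using y1 y2 s(2) t(2) by auto
  then have "s = t"
    using ordered[of s t] ordered[of t s] s(1) t(1) by (cases "s \<le> t") auto
  with s t show "y1 = y2"
    by simp
qed

lemma norm_le_divide_of_sphere_point:
  fixes x q y :: "'a::real_inner"
  assumes "0 < t" "norm (y - q) \<le> t"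
    and "2 * t * ((y - q) \<bullet> (x - q)) \<le> norm (y - q) * (norm (x - q))\<^sup>2"
    and "dist x y = \<epsilon>" "\<epsilon> \<le> dist x q"
  shows "norm (y - q) \<le> \<epsilon>\<^sup>2 / t"
proof -
  define h W k where "h = norm (y - q)" and "W = (norm (x - q))\<^sup>2" and "k = (y - q) \<bullet> (x - q)"
  have "\<epsilon>\<^sup>2 = (norm ((x - q) - (y - q)))\<^sup>2"
    using assms(4) by (simp add: dist_norm)
  also have "\<dots> = W - 2 * k + h\<^sup>2"
    unfolding norm_diff_power2 h_def W_def k_def by (simp add: inner_commute)
  finally have eq: "\<epsilon>\<^sup>2 = W - 2 * k + h\<^sup>2" .
  have "\<epsilon>\<^sup>2 \<le> W"
    unfolding W_def using assms(4,5) by (intro power_mono) (auto simp: dist_norm)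
  have "2 * t * k \<le> h * W"
    using assms(3) by (simp add: h_def W_def k_def)
  have "t * h\<^sup>2 = t * \<epsilon>\<^sup>2 - t * W + 2 * t * k"
    by (simp add: eq algebra_simps)
  also have "\<dots> \<le> t * \<epsilon>\<^sup>2 - (t - h) * W"
    using \<open>2 * t * k \<le> h * W\<close> by (simp add: algebra_simps)
  also have "\<dots> \<le> t * \<epsilon>\<^sup>2 - (t - h) * \<epsilon>\<^sup>2"
    using \<open>\<epsilon>\<^sup>2 \<le> W\<close> assms(2) by (simp add: h_def mult_left_mono)
  finally have "h * (t * h) \<le> h * \<epsilon>\<^sup>2"
    by (simp add: power2_eq_square algebra_simps)
  then have "h = 0 \<or> t * h \<le> \<epsilon>\<^sup>2"
    by (auto simp: h_def mult_le_cancel_left)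
  then show ?thesis
    using assms(1) by (auto simp: h_def pos_le_divide_eq mult.commute)
qed

lemma le_divide_if_le_divide_below:
  fixes a c h r :: real
  assumes "0 \<le> a" "a < r" "0 \<le> c" "\<And>t. a < t \<Longrightarrow> t < r \<Longrightarrow> h \<le> c / t"
  shows "h \<le> c / r"
proof (cases "h \<le> 0")
  case True
  then show ?thesis
    using assms(1-3) by (meson divide_nonneg_nonneg less_le_trans less_imp_le order_trans)
next
  case False
  have "r \<le> c / h"
  proof (rule dense_le_bounded[OF assms(2)])
    fix t assume "a < t" "t < r"
    then have "h \<le> c / t"
      by (rule assms(4))
    then show "t \<le> c / h"
      using False \<open>a < t\<close> assms(1) by (simp add: field_simps)
  qed
  then show ?thesis
    using False assms(1,2) by (simp add: field_simps)
qed

lemma nonpos_if_le_divide_above: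
  fixes a c h :: real
  assumes "0 \<le> a" "0 \<le> c" "\<And>t. a < t \<Longrightarrow> h \<le> c / t"
  shows "h \<le> 0"
proof (rule ccontr)
  assume "\<not> h \<le> 0"
  define t where "t = a + 1 + c / h"
  have "0 \<le> c / h"
    using \<open>\<not> h \<le> 0\<close> assms(2) by simp
  then have "a < t"
    by (simp add: t_def)
  then have "h * t \<le> c"
    using assms(3)[of t] assms(1) by (simp add: field_simps)
  moreover have "h * t = h * (a + 1) + c"
    using \<open>\<not> h \<le> 0\<close> by (simp add: t_def field_simps)
  moreover have "0 < h * (a + 1)"
    using \<open>\<not> h \<le> 0\<close> assms(1) by simp
  ultimately show False
    by linarith
qed

lemma ereal_le_divide_if_le_divide_below:
  fixes a c h :: real and R :: ereal
  assumes "0 \<le> a" "ereal a < R" "0 \<le> c" "\<And>t. a < t \<Longrightarrow> ereal t < R \<Longrightarrow> h \<le> c / t"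
  shows "ereal h \<le> ereal c / R"
proof (cases R)
  case (real r)
  with assms(2) have "a < r"
    by simp
  have "h \<le> c / r"
  proof (rule le_divide_if_le_divide_below[OF assms(1) \<open>a < r\<close> assms(3)])
    fix t assume "a < t" "t < r"
    then show "h \<le> c / t"
      using assms(4) real by simp
  qed
  then show ?thesis
    using real \<open>a < r\<close> assms(1) by simp
next
  case PInf
  have "h \<le> 0"
  proof (rule nonpos_if_le_divide_above[OF assms(1,3)])
    fix t assume "a < t"
    then show "h \<le> c / t"
      using assms(4) PInf by simp
  qed
  then show ?thesis
    using PInf by simp
qed (use assms(2) in simp)

lemma sphere_closed_segment_point_bound:
  fixes A :: "'a::euclidean_space set"
  assumes "closed A" "q \<in> A" "x \<in> A" "p \<in> UP A" "xi A p = q"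
    and "0 < \<epsilon>" "ereal \<epsilon> < reach A" "dist x p < \<epsilon>" "\<epsilon> \<le> dist x q"
    and y: "y \<in> sphere x \<epsilon> \<inter> closed_segment q p"
  shows "ereal (norm (y - q)) \<le> ereal (\<epsilon>\<^sup>2) / reach A"
proof (rule ereal_le_divide_if_le_divide_below)
  have "dist p q = infdist p A"
    using xi_nearest(2)[OF assms(4)] assms(5) by simp
  then have "dist y q = infdist y A"
    using infdist_closed_segment_nearest[OF assms(2)] y by (simp add: closed_segment_commute)
  have "dist y q \<le> dist q p"
    using y dist_in_closed_segment[of y q p] by simp
  then have "norm (y - q) \<le> dist p q"
    by (metis dist_commute dist_norm)
  also have "\<dots> \<le> dist p x"
    using \<open>dist p q = infdist p A\<close> infdist_le[OF assms(3)] by simp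
  finally have "norm (y - q) < \<epsilon>"
    using assms(8) by (simp add: dist_commute)
  fix t assume "\<epsilon> < t" "ereal t < reach A"
  with assms(6) have "0 < t"
    by simp
  show "norm (y - q) \<le> \<epsilon>\<^sup>2 / t"
  proof (rule norm_le_divide_of_sphere_point)
    show "2 * t * ((y - q) \<bullet> (x - q)) \<le> norm (y - q) * (norm (x - q))\<^sup>2"
      using inner_le_reach[OF assms(1-3) \<open>dist y q = infdist y A\<close> \<open>0 < t\<close>]
        \<open>ereal t < reach A\<close> .
  qed (use \<open>0 < t\<close> \<open>\<epsilon> < t\<close> \<open>norm (y - q) < \<epsilon>\<close> y assms(9) in auto)
qed (use assms(6,7) in auto)

theorem mainTheorem15:
  fixes A X :: "'a::euclidean_space set"
    and x p q :: 'a and \<tau>bar \<delta> \<epsilon> :: real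
  assumes "closed A"
    and "reach A > 0"
    and "0 < \<tau>bar" and "ereal \<tau>bar \<le> reach A"
    and "finite X" and "X \<subseteq> A"
    and "\<forall>a\<in>A. \<exists>x'\<in>X. dist a x' < \<delta>"
    and "\<delta> < \<tau>bar / 4"
    and "x \<in> X"
    and "0 < \<epsilon>" and "ereal \<epsilon> < reach A"
    and "q \<in> A"
    and "p \<in> ball x \<epsilon> \<inter> UP_at A q"
    and "q \<notin> ball x \<epsilon>"
  shows "(\<exists>!y. y \<in> sphere x \<epsilon> \<inter> closed_segment q p)
       \<and> (\<forall>y \<in> sphere x \<epsilon> \<inter> closed_segment q p.
            ereal (norm (y - q)) \<le> ereal (\<epsilon>^2) / reach A)"
proof -
  \<comment> \<open>of the sampling hypotheses only \<open>x \<in> A\<close> is needed\<close>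
  have "x \<in> A"
    using assms(6,9) by blast
  have p: "dist x p < \<epsilon>" "p \<in> UP A" "xi A p = q"
    using assms(13) by (auto simp: UP_at_def)
  have "\<epsilon> \<le> dist x q"
    using assms(14) by simp
  show ?thesis
    using closed_segment_sphere_unique[OF \<open>\<epsilon> \<le> dist x q\<close> p(1)]
      sphere_closed_segment_point_bound[OF assms(1,12) \<open>x \<in> A\<close> p(2,3) assms(10,11) p(1)
        \<open>\<epsilon> \<le> dist x q\<close>]
    by blast
qed

end
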